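(* Let $n,k\ge1$ and let $\mathcal{O}_x$ be a square Hermitian orthogonal design of size $[n,n,2k-1]$. Then there exists an $n\times n$ matrix $\mathcal{L}_x$, each entry of which is a complex multiple of $x_{2k}$, such that $\mathcal{O}_x+\mathcal{L}_x$ is a square Hermitian orthogonal design of size $[n,n,2k]$; equivalently, substituting $x_{2i-1}=(z_i+z_i^* )/2$ and $x_{2i}=(z_i-z_i^* )/(2\sqrt{-1})$ for $i=1,\ldots,k$, $\mathcal{O}_x+\mathcal{L}_x$ becomes a square complex orthogonal design of size $[n,n,k]$.
   Context: Let $x_1,x_2,\ldots$ be formal real indeterminates. A Hermitian orthogonal design (HOD) of size $[p,n,m]$ is a $p\times n$ matrix $\mathcal{O}_x$ whose entries are complex linear combinations of $x_1,\ldots,x_m$ such that $\mathcal{O}_x^H\mathcal{O}_x=(x_1^2+\cdots+x_m^2)I_n$; square if $p=n$. With $z_1,\ldots,z_k$ formal complex indeterminates, a square complex orthogonal design of size $[n,n,k]$ is an $n\times n$ matrix whose entries are complex linear combinations of $z_1,\ldots,z_k,z_1^*,\ldots,z_k^*$ such that $\mathcal{O}_z^H\mathcal{O}_z=(|z_1|^2+\cdots+|z_k|^2)I_n$. *)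

theory Defs
  imports "HOL-Analysis.Analysis"
begin

definition cadj :: "complex^'n^'n \<Rightarrow> complex^'n^'n" where
  "cadj M = (\<chi> i j. cnj (M $ j $ i))"

text \<open>The design with coefficient matrices A 0, ..., A (m-1), evaluated at a real
  assignment x of the indeterminates x_1..x_m (0-indexed): O_x = sum_j x_j A_j.\<close>
definition design_eval :: "(nat \<Rightarrow> complex^'n^'n) \<Rightarrow> nat \<Rightarrow> (nat \<Rightarrow> real) \<Rightarrow> complex^'n^'n" where
  "design_eval A m x = (\<chi> i j. \<Sum>l<m. complex_of_real (x l) * (A l $ i $ j))"

text \<open>Square Hermitian orthogonal design of size [n,n,m] (n = CARD('n)):
  the identity O_x^H O_x = (x_1^2+...+x_m^2) I holds identically in the real variables.\<close>
definition is_square_HOD :: "(nat \<Rightarrow> complex^'n^'n) \<Rightarrow> nat \<Rightarrow> bool" where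
  "is_square_HOD A m \<longleftrightarrow>
     (\<forall>x. cadj (design_eval A m x) ** design_eval A m x
            = mat (complex_of_real (\<Sum>l<m. (x l)\<^sup>2)))"

definition is_square_COD :: "((nat \<Rightarrow> complex) \<Rightarrow> complex^'n^'n) \<Rightarrow> nat \<Rightarrow> bool" where
  "is_square_COD F k \<longleftrightarrow>
     (\<exists>B C :: nat \<Rightarrow> complex^'n^'n.
        (\<forall>z. F z = (\<chi> i j. \<Sum>l<k. z l * (B l $ i $ j) + cnj (z l) * (C l $ i $ j))))
     \<and> (\<forall>z. cadj (F z) ** F z = mat (complex_of_real (\<Sum>l<k. (cmod (z l))\<^sup>2)))"

text \<open>The substitution x_{2i-1} = (z_i+z_i^*)/2 = Re z_i, x_{2i} = (z_i-z_i^*)/(2 sqrt(-1)) = Im z_i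
  (0-indexed: x (2i) = Re (z i), x (2i+1) = Im (z i)).\<close>
definition subst_z :: "(nat \<Rightarrow> complex) \<Rightarrow> nat \<Rightarrow> real" where
  "subst_z z j = (if even j then Re (z (j div 2)) else Im (z (j div 2)))"

end

theory Submission
  imports Defs
begin

text \<open>
  By polarisation, a square HOD in \<open>m\<close> real variables is the same as a family of coefficient
  matrices satisfying the Hurwitz--Radon relations \<open>A\<^sub>i\<^sup>H A\<^sub>j + A\<^sub>j\<^sup>H A\<^sub>i = 2\<delta>\<^bsub>ij\<^esub> I\<close>.
  Multiplying on the left by \<open>A\<^sub>0\<^sup>H\<close> turns \<open>A\<^sub>0\<close> into \<open>I\<close> and the remaining matrices into
  pairwise anticommuting skew-Hermitian unitaries \<open>B\<^sub>1, \<dots>, B\<^bsub>m-1\<^esub>\<close>. For odd \<open>m\<close> there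
  is an even number of them, so their product anticommutes with each \<open>B\<^sub>j\<close>; it is unitary and
  squares to \<open>\<plusminus>I\<close>, hence a unimodular multiple \<open>Q\<close> of it is skew-Hermitian, and \<open>A\<^sub>0 Q\<close> is
  a coefficient matrix for one more variable. Substituting real and imaginary parts of \<open>z\<^sub>i\<close> for
  pairs of real variables turns a square HOD in \<open>2k\<close> variables into a COD in \<open>k\<close> variables.
\<close>

lemma mat_mult_left: "(mat c :: 'a::semiring_1^'n^'n) ** M = (\<chi> i j. c * M $ i $ j)"
  by (simp add: matrix_matrix_mult_def mat_def vec_eq_iff if_distrib if_distribR cong: if_cong)

lemma mat_mult_right: "M ** (mat c :: 'a::semiring_1^'n^'n) = (\<chi> i j. M $ i $ j * c)"
  by (simp add: matrix_matrix_mult_def mat_def vec_eq_iff if_distrib if_distribR cong: if_cong)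

lemma mat_mult_commute: "(mat c :: 'a::comm_semiring_1^'n^'n) ** M = M ** mat c"
  by (simp add: mat_mult_left mat_mult_right mult.commute)

lemma mat_mult_mat: "(mat a :: 'a::semiring_1^'n^'n) ** mat b = mat (a * b)"
  by (subst mat_mult_left) (simp add: mat_def vec_eq_iff)

lemma mat_add: "mat a + mat b = (mat (a + b) :: 'a::monoid_add^'n^'n)"
  by (simp add: mat_def vec_eq_iff)

lemma mat_uminus: "- mat a = (mat (- a) :: 'a::group_add^'n^'n)"
  by (simp add: mat_def vec_eq_iff)

lemma scaleR_mat: "r *\<^sub>R mat c = (mat (r *\<^sub>R c) :: 'a::real_vector^'n^'n)"
  by (simp add: mat_def vec_eq_iff)

lemma sum_mat: "(\<Sum>i\<in>S. mat (f i)) = (mat (\<Sum>i\<in>S. f i) :: 'a::comm_monoid_add^'n^'n)"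
  by (induction S rule: infinite_finite_induct) (simp_all add: mat_add)

lemma matrix_mul_uminus_left: "(- A :: 'a::ring_1^'n^'m) ** B = - (A ** B)"
  by (simp add: matrix_matrix_mult_def vec_eq_iff sum_negf)

lemma matrix_mul_uminus_right: "(A :: 'a::ring_1^'n^'m) ** (- B) = - (A ** B)"
  by (simp add: matrix_matrix_mult_def vec_eq_iff sum_negf)

lemma cadj_mult: "cadj (A ** B) = cadj B ** cadj (A :: complex^'n^'n)"
  by (simp add: cadj_def matrix_matrix_mult_def vec_eq_iff mult.commute)

lemma cadj_cadj [simp]: "cadj (cadj A) = A"
  by (simp add: cadj_def vec_eq_iff)

lemma cadj_mat [simp]: "cadj (mat c) = mat (cnj c)"
  by (simp add: cadj_def mat_def vec_eq_iff)

lemma unitary_left_inverse_imp_right: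
  "cadj U ** U = mat 1 \<Longrightarrow> U ** cadj U = (mat 1 :: complex^'n^'n)"
  using matrix_left_right_inverse by blast

lemma design_gram:
  fixes A :: "nat \<Rightarrow> complex^'n^'n"
  shows "cadj (design_eval A m x) ** design_eval A m x
     = (\<Sum>i<m. \<Sum>j<m. (x i * x j) *\<^sub>R (cadj (A i) ** A j))"
proof -
  have "(\<Sum>r\<in>UNIV. (\<Sum>i<m. x i * cnj (A i $ r $ p)) * (\<Sum>j<m. x j * A j $ r $ q))
      = (\<Sum>i<m. \<Sum>j<m. x i * x j * (\<Sum>r\<in>UNIV. cnj (A i $ r $ p) * A j $ r $ q))"
    for p q :: 'n
    by (simp add: sum_product sum_distrib_left mult_ac sum.swap[of _ UNIV])
  then show ?thesis
    by (simp add: cadj_def design_eval_def matrix_matrix_mult_def vec_eq_iff sum_component)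
      (simp add: scaleR_conv_of_real)
qed

definition hurwitz_radon :: "(nat \<Rightarrow> complex^'n^'n) \<Rightarrow> nat \<Rightarrow> bool" where
  "hurwitz_radon A m \<longleftrightarrow>
     (\<forall>i<m. \<forall>j<m. cadj (A i) ** A j + cadj (A j) ** A i = mat (if i = j then 2 else 0))"

lemma hurwitz_radonD:
  "hurwitz_radon A m \<Longrightarrow> i < m \<Longrightarrow> j < m
     \<Longrightarrow> cadj (A i) ** A j + cadj (A j) ** A i = mat (if i = j then 2 else 0)"
  by (simp add: hurwitz_radon_def)

lemma double_sum_basis:
  fixes M :: "nat \<Rightarrow> nat \<Rightarrow> 'a::real_vector"
  assumes "i < m" "j < m"
  shows "(\<Sum>a<m. \<Sum>b<m. (of_bool (a = i) * of_bool (b = j)) *\<^sub>R M a b) = M i j"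
proof -
  have "(of_bool (a = i) * of_bool (b = j)) *\<^sub>R M a b
          = (if b = j then if a = i then M a b else 0 else 0)" for a b
    by simp
  then show ?thesis
    using assms by (simp add: sum.delta)
qed

lemma design_gram_at_basis_pair:
  fixes A :: "nat \<Rightarrow> complex^'n^'n"
  assumes "i < m" "j < m"
  defines "x \<equiv> \<lambda>l. of_bool (l = i) + of_bool (l = j)"
  shows "cadj (design_eval A m x) ** design_eval A m x
           = cadj (A i) ** A i + cadj (A i) ** A j + cadj (A j) ** A i + cadj (A j) ** A j"
proof -
  let ?M = "\<lambda>a b. cadj (A a) ** A b"
  let ?S = "\<lambda>i j. \<Sum>a<m. \<Sum>b<m. (of_bool (a = i) * of_bool (b = j) :: real) *\<^sub>R ?M a b"
  have "(\<Sum>a<m. \<Sum>b<m. (x a * x b) *\<^sub>R ?M a b) = ?S i i + ?S i j + ?S j i + ?S j j"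
    by (simp add: x_def algebra_simps sum.distrib)
  then show ?thesis
    using assms by (simp add: design_gram double_sum_basis)
qed

lemma sum_squares_basis_pair:
  fixes i j m :: nat
  assumes "i < m" "j < m"
  shows "(\<Sum>l<m. (of_bool (l = i) + of_bool (l = j) :: real)\<^sup>2) = (if i = j then 4 else 2)"
proof -
  have "(of_bool (l = i) + of_bool (l = j) :: real)\<^sup>2
          = of_bool (l = i) + of_bool (l = j) + 2 * of_bool (l = i \<and> i = j)" for l
    by auto
  then show ?thesis
    using assms by (simp add: sum.distrib flip: sum_distrib_left)
qed

lemma square_HOD_imp_hurwitz_radon:
  fixes A :: "nat \<Rightarrow> complex^'n^'n"
  assumes "is_square_HOD A m"
  shows "hurwitz_radon A m"
  unfolding hurwitz_radon_def
proof (intro allI impI)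
  let ?M = "\<lambda>i j. cadj (A i) ** A j"
  have pair: "?M i i + ?M i j + ?M j i + ?M j j = mat (if i = j then 4 else 2)"
    if "i < m" "j < m" for i j
  proof -
    have "?M i i + ?M i j + ?M j i + ?M j j
            = mat (complex_of_real (\<Sum>l<m. (of_bool (l = i) + of_bool (l = j))\<^sup>2))"
      using assms unfolding is_square_HOD_def design_gram_at_basis_pair[OF that, symmetric]
      by blast
    also have "\<dots> = mat (if i = j then 4 else 2)"
      using sum_squares_basis_pair[OF that] by simp
    finally show ?thesis .
  qed
  have unit: "?M i i = mat 1" if "i < m" for i
  proof -
    have "(4::real) *\<^sub>R ?M i i = ?M i i + ?M i i + ?M i i + ?M i i"
      by (metis (no_types) add.assoc scaleR_2 scaleR_add_left numeral_Bit0)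
    also have "\<dots> = (4::real) *\<^sub>R mat 1"
      using pair[OF that that] by (simp add: scaleR_mat) (simp add: scaleR_conv_of_real)
    finally show ?thesis
      by simp
  qed
  fix i j assume "i < m" "j < m"
  show "?M i j + ?M j i = mat (if i = j then 2 else 0)"
  proof (cases "i = j")
    case True
    then show ?thesis
      using unit[OF \<open>i < m\<close>] by (simp add: mat_add)
  next
    case False
    have "?M i j + ?M j i = (?M i i + ?M i j + ?M j i + ?M j j) - (?M i i + ?M j j)"
      by (simp add: algebra_simps)
    also have "\<dots> = 0"
      using pair[OF \<open>i < m\<close> \<open>j < m\<close>] unit \<open>i < m\<close> \<open>j < m\<close> False by (simp add: mat_add)
    finally show ?thesis
      using False by simp
  qed
qed

lemma hurwitz_radon_imp_square_HOD:
  fixes A :: "nat \<Rightarrow> complex^'n^'n"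
  assumes "hurwitz_radon A m"
  shows "is_square_HOD A m"
  unfolding is_square_HOD_def
proof
  fix x :: "nat \<Rightarrow> real"
  let ?S = "\<Sum>i<m. \<Sum>j<m. (x i * x j) *\<^sub>R (cadj (A i) ** A j)"
  let ?s = "complex_of_real (\<Sum>l<m. (x l)\<^sup>2)"
  have diag: "(x i * x j) *\<^sub>R mat (if i = j then 2 else 0)
                = (if j = i then mat (of_real (2 * (x i)\<^sup>2)) else 0 :: complex^'n^'n)" for i j
    by (simp add: scaleR_mat) (simp add: scaleR_conv_of_real power2_eq_square mult.commute)
  have "?S + ?S = (\<Sum>i<m. \<Sum>j<m. (x i * x j) *\<^sub>R (cadj (A i) ** A j + cadj (A j) ** A i))"
    by (subst (2) sum.swap) (simp add: sum.distrib scaleR_add_right mult.commute)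
  also have "\<dots> = (\<Sum>i<m. \<Sum>j<m. (x i * x j) *\<^sub>R mat (if i = j then 2 else 0))"
    using hurwitz_radonD[OF assms] by (intro sum.cong refl) simp
  also have "\<dots> = mat ?s + mat ?s"
    by (simp add: diag sum.delta sum_mat mat_add sum_distrib_left)
  finally have "(2::real) *\<^sub>R ?S = (2::real) *\<^sub>R mat ?s"
    by (simp add: scaleR_2)
  then show "cadj (design_eval A m x) ** design_eval A m x = mat ?s"
    by (simp add: design_gram)
qed

lemma square_HOD_iff_hurwitz_radon: "is_square_HOD A m \<longleftrightarrow> hurwitz_radon A m"
  using square_HOD_imp_hurwitz_radon hurwitz_radon_imp_square_HOD by blast

definition mat_prod_list :: "(nat \<Rightarrow> 'a::semiring_1^'n^'n) \<Rightarrow> nat list \<Rightarrow> 'a^'n^'n" where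
  "mat_prod_list B xs = foldr (\<lambda>i M. B i ** M) xs (mat 1)"

lemma mat_prod_list_Nil [simp]: "mat_prod_list B [] = mat 1"
  by (simp add: mat_prod_list_def)

lemma mat_prod_list_Cons [simp]: "mat_prod_list B (a # xs) = B a ** mat_prod_list B xs"
  by (simp add: mat_prod_list_def)

context
  fixes B :: "nat \<Rightarrow> 'a::real_algebra_1^'n^'n" and I :: "nat set"
  assumes square: "\<And>i. i \<in> I \<Longrightarrow> B i ** B i = - mat 1"
    and anticommute: "\<And>i j. i \<in> I \<Longrightarrow> j \<in> I \<Longrightarrow> i \<noteq> j \<Longrightarrow> B i ** B j = - (B j ** B i)"
begin

lemma mat_prod_list_commute_sign:
  assumes "distinct xs" "set xs \<subseteq> I" "j \<in> I"
  shows "B j ** mat_prod_list B xs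
           = ((-1) ^ (length xs + of_bool (j \<in> set xs))) *\<^sub>R (mat_prod_list B xs ** B j)"
  using assms
proof (induction xs)
  case Nil
  then show ?case by simp
next
  case (Cons a ys)
  let ?P = "mat_prod_list B ys"
  show ?case
  proof (cases "a = j")
    case False
    have IH: "B j ** ?P = ((-1) ^ (length ys + of_bool (j \<in> set ys))) *\<^sub>R (?P ** B j)"
      using Cons by auto
    have "B j ** mat_prod_list B (a # ys) = - (B a ** (B j ** ?P))"
      using anticommute[of j a] Cons.prems False
      by (simp add: matrix_mul_assoc matrix_mul_uminus_left)
    also have "\<dots> = ((-1) ^ (length (a # ys) + of_bool (j \<in> set (a # ys))))
                      *\<^sub>R (mat_prod_list B (a # ys) ** B j)"
      using False by (simp add: IH matrix_scalar_ac matrix_mul_assoc flip: scalar_matrix_assoc)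
    finally show ?thesis .
  next
    case True
    with Cons.prems have "j \<notin> set ys"
      by auto
    with Cons have IH: "?P ** B j = ((-1) ^ length ys) *\<^sub>R (B j ** ?P)"
      by auto
    have "mat_prod_list B (a # ys) ** B j = ((-1) ^ length ys) *\<^sub>R (B j ** (B j ** ?P))"
      using True by (simp add: IH matrix_scalar_ac flip: matrix_mul_assoc scalar_matrix_assoc)
    then show ?thesis
      using True by (simp flip: power_add add: mult_2[symmetric])
  qed
qed

lemma mat_prod_list_square_sign:
  assumes "distinct xs" "set xs \<subseteq> I"
  shows "\<exists>e. (e = 1 \<or> e = -1) \<and> mat_prod_list B xs ** mat_prod_list B xs = e *\<^sub>R mat 1"
  using assms
proof (induction xs)
  case Nil
  then show ?case by (intro exI[of _ 1]) simp
next
  case (Cons a ys)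
  let ?P = "mat_prod_list B ys"
  obtain e where e: "e = 1 \<or> e = -1" "?P ** ?P = e *\<^sub>R mat 1"
    using Cons by auto
  have commute: "?P ** B a = ((-1) ^ length ys) *\<^sub>R (B a ** ?P)"
    using mat_prod_list_commute_sign[of ys a] Cons.prems by auto
  have "mat_prod_list B (a # ys) ** mat_prod_list B (a # ys) = B a ** ((?P ** B a) ** ?P)"
    by (simp add: matrix_mul_assoc)
  also have "\<dots> = ((-1) ^ length ys) *\<^sub>R ((B a ** B a) ** (?P ** ?P))"
    by (simp add: commute matrix_scalar_ac scalar_matrix_assoc matrix_mul_assoc)
  also have "\<dots> = (- ((-1) ^ length ys * e)) *\<^sub>R mat 1"
    using square[of a] Cons.prems e(2) by (simp add: matrix_mul_uminus_left scalar_matrix_assoc)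
  finally show ?case
    using e(1) by (intro exI[of _ "- ((-1) ^ length ys * e)"]) (auto simp: minus_one_power_iff)
qed

end

lemma mat_prod_list_unitary:
  fixes B :: "nat \<Rightarrow> complex^'n^'n"
  assumes "\<And>i. i \<in> set xs \<Longrightarrow> cadj (B i) ** B i = mat 1"
  shows "cadj (mat_prod_list B xs) ** mat_prod_list B xs = mat 1"
  using assms
proof (induction xs)
  case Nil
  then show ?case by simp
next
  case (Cons a ys)
  have "cadj (mat_prod_list B (a # ys)) ** mat_prod_list B (a # ys)
          = cadj (mat_prod_list B ys) ** ((cadj (B a) ** B a) ** mat_prod_list B ys)"
    by (simp add: cadj_mult matrix_mul_assoc)
  with Cons show ?case by simp
qed

lemma unitary_sign_square_rotate_skew:
  fixes P :: "complex^'n^'n"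
  assumes unitary: "cadj P ** P = mat 1" and square: "P ** P = e *\<^sub>R mat 1"
    and sign: "e = 1 \<or> e = -1"
  obtains c where "cadj (mat c ** P) = - (mat c ** P)" "cadj (mat c ** P) ** (mat c ** P) = mat 1"
proof -
  have adjoint: "cadj P = e *\<^sub>R P"
  proof -
    have "cadj P = cadj P ** ((e * e) *\<^sub>R mat 1)"
      using sign by auto
    also have "\<dots> = e *\<^sub>R (cadj P ** (P ** P))"
      by (simp add: square matrix_scalar_ac flip: scalar_matrix_assoc)
    finally show ?thesis
      using unitary by (simp add: matrix_mul_assoc)
  qed
  \<comment> \<open>\<open>P\<close> is Hermitian or skew-Hermitian; in the first case multiply by \<open>\<i>\<close>.\<close>
  define c where "c = (if e = 1 then \<i> else 1)"
  have "cadj (mat c ** P) = mat (cnj c) ** (e *\<^sub>R P)"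
    by (simp add: cadj_mult adjoint mat_mult_commute)
  also have "\<dots> = mat (e *\<^sub>R cnj c) ** P"
    by (simp add: matrix_scalar_ac scaleR_mat)
  also have "\<dots> = - (mat c ** P)"
    using sign by (auto simp: c_def matrix_mul_uminus_left simp flip: mat_uminus)
  finally have skew: "cadj (mat c ** P) = - (mat c ** P)" .
  have "cadj (mat c ** P) ** (mat c ** P) = cadj P ** (mat (cnj c * c) ** P)"
    by (simp add: cadj_mult flip: matrix_mul_assoc mat_mult_mat)
  also have "\<dots> = mat 1"
    using unitary by (simp add: c_def)
  finally show ?thesis
    using that skew by blast
qed

lemma exists_skew_unitary_anticommuting:
  fixes B :: "nat \<Rightarrow> complex^'n^'n"
  assumes "finite I" "even (card I)"
    and skew: "\<And>i. i \<in> I \<Longrightarrow> cadj (B i) = - B i"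
    and unitary: "\<And>i. i \<in> I \<Longrightarrow> cadj (B i) ** B i = mat 1"
    and anticommute: "\<And>i j. i \<in> I \<Longrightarrow> j \<in> I \<Longrightarrow> i \<noteq> j \<Longrightarrow> B i ** B j = - (B j ** B i)"
  obtains Q where "cadj Q = - Q" "cadj Q ** Q = mat 1" "\<And>j. j \<in> I \<Longrightarrow> B j ** Q = - (Q ** B j)"
proof -
  have square: "B i ** B i = - mat 1" if "i \<in> I" for i
    using unitary[OF that] skew[OF that] by (metis matrix_mul_uminus_left minus_minus)
  define xs where "xs = sorted_list_of_set I"
  have xs: "distinct xs" "set xs = I" "length xs = card I"
    using assms(1) by (auto simp: xs_def)
  define P where "P = mat_prod_list B xs"
  have P_anticommute: "B j ** P = - (P ** B j)" if "j \<in> I" for j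
    using mat_prod_list_commute_sign[where B = B and I = I, OF square anticommute xs(1)]
      xs that assms(2)
    by (simp add: P_def)
  obtain e where "e = 1 \<or> e = -1" "P ** P = e *\<^sub>R mat 1"
    using mat_prod_list_square_sign[where B = B and I = I, OF square anticommute xs(1)] xs(2)
    by (auto simp: P_def)
  moreover have "cadj P ** P = mat 1"
    using mat_prod_list_unitary[of xs B] unitary xs(2) by (simp add: P_def)
  ultimately obtain c where Q: "cadj (mat c ** P) = - (mat c ** P)"
    "cadj (mat c ** P) ** (mat c ** P) = mat 1"
    using unitary_sign_square_rotate_skew by metis
  have "B j ** (mat c ** P) = - ((mat c ** P) ** B j)" if "j \<in> I" for j
  proof -
    have "B j ** (mat c ** P) = mat c ** (B j ** P)"
      by (metis matrix_mul_assoc mat_mult_commute)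
    also have "\<dots> = - ((mat c ** P) ** B j)"
      by (simp add: P_anticommute[OF that] matrix_mul_uminus_right matrix_mul_assoc)
    finally show ?thesis .
  qed
  with Q that show ?thesis
    by blast
qed

lemma hurwitz_radon_unitary:
  assumes "hurwitz_radon A m" "i < m"
  shows "cadj (A i) ** A i = mat 1"
proof -
  have "(2::real) *\<^sub>R (cadj (A i) ** A i) = (2::real) *\<^sub>R mat 1"
    using hurwitz_radonD[OF assms(1,2,2)] by (simp add: scaleR_2 mat_add)
  then show ?thesis
    by simp
qed

lemma hurwitz_radon_mult_unitary:
  assumes "cadj U ** U = mat 1"
  shows "hurwitz_radon (\<lambda>i. U ** A i) m \<longleftrightarrow> hurwitz_radon A m"
proof -
  have cancel: "cadj U ** (U ** X) = X" for X
    using assms by (simp add: matrix_mul_assoc)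
  have "cadj (U ** A i) ** (U ** A j) = cadj (A i) ** A j" for i j
    by (simp add: cadj_mult cancel flip: matrix_mul_assoc)
  then show ?thesis
    by (simp add: hurwitz_radon_def)
qed

lemma hurwitz_radon_normalized_skew:
  assumes "hurwitz_radon B m" "B 0 = mat 1" "0 < i" "i < m"
  shows "cadj (B i) = - B i"
proof -
  have "cadj (B 0) ** B i + cadj (B i) ** B 0 = 0"
    using hurwitz_radonD[OF assms(1), of 0 i] assms(3,4) by simp
  then show ?thesis
    using assms(2) by (simp add: add_eq_0_iff)
qed

lemma hurwitz_radon_normalized_anticommute:
  assumes "hurwitz_radon B m" "B 0 = mat 1" "0 < i" "i < m" "0 < j" "j < m" "i \<noteq> j"
  shows "B i ** B j = - (B j ** B i)"
proof -
  have "cadj (B i) ** B j + cadj (B j) ** B i = 0"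
    using hurwitz_radonD[OF assms(1), of i j] assms by simp
  then have "- (B i ** B j) + - (B j ** B i) = 0"
    using hurwitz_radon_normalized_skew[OF assms(1,2)] assms
    by (simp add: matrix_mul_uminus_left)
  then show ?thesis
    by (metis add_eq_0_iff minus_minus)
qed

lemma hurwitz_radon_fun_upd:
  assumes "hurwitz_radon A m" "cadj L ** L = mat 1"
    and "\<And>j. j < m \<Longrightarrow> cadj L ** A j + cadj (A j) ** L = 0"
  shows "hurwitz_radon (A(m := L)) (Suc m)"
  unfolding hurwitz_radon_def
proof (intro allI impI)
  fix i j assume "i < Suc m" "j < Suc m"
  then consider "i < m" "j < m" | "i = m" "j < m" | "i < m" "j = m" | "i = m" "j = m"
    by linarith
  then show "cadj ((A(m := L)) i) ** (A(m := L)) j + cadj ((A(m := L)) j) ** (A(m := L)) i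
               = mat (if i = j then 2 else 0)"
    by cases (use assms in \<open>auto simp: hurwitz_radon_def mat_add add.commute\<close>)
qed

lemma hurwitz_radon_extend_odd:
  fixes A :: "nat \<Rightarrow> complex^'n^'n"
  assumes HR: "hurwitz_radon A m" and "odd m"
  obtains L where "hurwitz_radon (A(m := L)) (Suc m)"
proof -
  have "0 < m"
    using \<open>odd m\<close> by (cases m) auto
  define A0 where "A0 = A 0"
  have A0_unitary: "cadj A0 ** A0 = mat 1" "A0 ** cadj A0 = mat 1"
    using hurwitz_radon_unitary[OF HR \<open>0 < m\<close>] unitary_left_inverse_imp_right
    by (auto simp: A0_def)
  define B where "B = (\<lambda>i. cadj A0 ** A i)"
  have HR_B: "hurwitz_radon B m"
    using HR A0_unitary(2) hurwitz_radon_mult_unitary[of "cadj A0" A m] by (simp add: B_def)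
  have B0: "B 0 = mat 1"
    using A0_unitary by (simp add: B_def A0_def)
  define I where "I = {1..<m}"
  have I: "finite I" "even (card I)" "\<And>i. i \<in> I \<Longrightarrow> 0 < i \<and> i < m"
    using \<open>odd m\<close> \<open>0 < m\<close> by (auto simp: I_def)
  have B_unitary: "cadj (B i) ** B i = mat 1" if "i \<in> I" for i
    using hurwitz_radon_unitary[OF HR_B] I(3)[OF that] by blast
  have B_skew: "cadj (B i) = - B i" if "i \<in> I" for i
    using hurwitz_radon_normalized_skew[OF HR_B B0] I(3)[OF that] by blast
  have B_anticommute: "B i ** B j = - (B j ** B i)" if "i \<in> I" "j \<in> I" "i \<noteq> j" for i j
    using hurwitz_radon_normalized_anticommute[OF HR_B B0] I(3) that by blast
  obtain Q where Q: "cadj Q = - Q" "cadj Q ** Q = mat 1"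
    and Q_anticommute: "\<And>j. j \<in> I \<Longrightarrow> B j ** Q = - (Q ** B j)"
    using exists_skew_unitary_anticommuting[where I = I and B = B,
        OF I(1,2) B_skew B_unitary B_anticommute]
    by blast
  have "cadj Q ** B j + cadj (B j) ** Q = 0" if "j < m" for j
  proof (cases "j = 0")
    case True
    then show ?thesis
      using B0 Q(1) by simp
  next
    case False
    then have "j \<in> I"
      using that by (simp add: I_def)
    then show ?thesis
      using Q(1) B_skew Q_anticommute by (simp add: matrix_mul_uminus_left)
  qed
  then have "hurwitz_radon (B(m := Q)) (Suc m)"
    using hurwitz_radon_fun_upd[OF HR_B Q(2)] by blast
  moreover have "A(m := A0 ** Q) = (\<lambda>i. A0 ** (B(m := Q)) i)"
    using A0_unitary(2) by (auto simp: B_def matrix_mul_assoc)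
  ultimately have "hurwitz_radon (A(m := A0 ** Q)) (Suc m)"
    by (simp only: hurwitz_radon_mult_unitary[OF A0_unitary(1)])
  then show ?thesis
    using that by blast
qed

lemma sum_lessThan_pairs: "(\<Sum>l<2 * (k::nat). f l) = (\<Sum>l<k. f (2 * l) + f (2 * l + 1))"
  by (induction k) (simp_all add: algebra_simps)

lemma complex_real_imag_combination:
  "of_real (Re z) * a + of_real (Im z) * b = z * ((a - \<i> * b) / 2) + cnj z * ((a + \<i> * b) / 2)"
  by (simp add: complex_eq_iff field_simps)

lemma square_HOD_subst_z_is_square_COD:
  fixes A :: "nat \<Rightarrow> complex^'n^'n"
  assumes "is_square_HOD A (2 * k)"
  shows "is_square_COD (\<lambda>z. design_eval A (2 * k) (subst_z z)) k"
  unfolding is_square_COD_def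
proof (intro conjI exI allI)
  fix z
  show "design_eval A (2 * k) (subst_z z)
          = (\<chi> i j. \<Sum>l<k. z l * ((\<chi> i j. (A (2 * l) $ i $ j - \<i> * A (2 * l + 1) $ i $ j) / 2) $ i $ j)
                          + cnj (z l) * ((\<chi> i j. (A (2 * l) $ i $ j + \<i> * A (2 * l + 1) $ i $ j) / 2) $ i $ j))"
    by (simp add: design_eval_def sum_lessThan_pairs subst_z_def complex_real_imag_combination)
  have "(\<Sum>l<2 * k. (subst_z z l)\<^sup>2) = (\<Sum>l<k. (cmod (z l))\<^sup>2)"
    by (simp add: sum_lessThan_pairs subst_z_def cmod_power2)
  then show "cadj (design_eval A (2 * k) (subst_z z)) ** design_eval A (2 * k) (subst_z z)
               = mat (complex_of_real (\<Sum>l<k. (cmod (z l))\<^sup>2))"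
    using assms unfolding is_square_HOD_def by metis
qed

theorem corollary2:
  fixes A :: "nat \<Rightarrow> complex^'n^'n" and k :: nat
  assumes "k \<ge> 1"
    and "is_square_HOD A (2*k - 1)"
  shows "\<exists>L :: complex^'n^'n.
           is_square_HOD (A((2*k - 1) := L)) (2*k)
         \<and> is_square_COD (\<lambda>z. design_eval (A((2*k - 1) := L)) (2*k) (subst_z z)) k"
proof -
  have odd: "odd (2*k - 1)" and Suc: "Suc (2*k - 1) = 2*k"
    using \<open>k \<ge> 1\<close> by auto
  have "hurwitz_radon A (2*k - 1)"
    using assms(2) by (simp add: square_HOD_iff_hurwitz_radon)
  then obtain L where "hurwitz_radon (A((2*k - 1) := L)) (Suc (2*k - 1))"
    using odd by (rule hurwitz_radon_extend_odd)
  then have "is_square_HOD (A((2*k - 1) := L)) (2*k)"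
    unfolding square_HOD_iff_hurwitz_radon Suc .
  then show ?thesis
    using square_HOD_subst_z_is_square_COD by blast
qed

end
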